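(* Let $r\ge 20$ and $n\ge1$ be integers, let $G=K_r^n$, and let $c=\frac{1}{40}\min\left(10^{-9},\left(1-\frac{1}{r}\right)^{n-1}\right)$. Let $0\le\epsilon<c$ and let $J$ be an independent set of $G$ with $\frac{|J|}{|G|}=\frac{1}{r}(1-\epsilon)$. Then there exists an independent set $I$ of $G$ with $\frac{|I|}{|G|}=\frac{1}{r}$ such that $J\subseteq I$.
   Context: $K_r^n$ is the $n$-fold weak (tensor) product of the complete graph $K_r$: its vertex set is $\mathbb{Z}_r^n$, and two vertices $x,y\in\mathbb{Z}_r^n$ are adjacent iff $x_j\neq y_j$ for every coordinate $j=1,\dots,n$. $|G|=r^n$ denotes the number of vertices. *)

theory Defs
  imports Complex_Main
begin

text \<open>Vertices of K_r^n: words x in Z_r^n, represented as functions nat => nat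
  with x j < r for j < n and x j = 0 for j >= n (canonical extension).\<close>
definition kvert :: "nat \<Rightarrow> nat \<Rightarrow> (nat \<Rightarrow> nat) set" where
  "kvert r n = {x. (\<forall>j<n. x j < r) \<and> (\<forall>j\<ge>n. x j = 0)}"

text \<open>Adjacency in the weak (tensor) product: differ in every coordinate.\<close>
definition kadj :: "nat \<Rightarrow> (nat \<Rightarrow> nat) \<Rightarrow> (nat \<Rightarrow> nat) \<Rightarrow> bool" where
  "kadj n x y \<longleftrightarrow> (\<forall>j<n. x j \<noteq> y j)"

definition kindep :: "nat \<Rightarrow> nat \<Rightarrow> (nat \<Rightarrow> nat) set \<Rightarrow> bool" where
  "kindep r n S \<longleftrightarrow> S \<subseteq> kvert r n \<and> (\<forall>x\<in>S. \<forall>y\<in>S. \<not> kadj n x y)"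

end

(*
  An independent set of K_r^n is an intersecting family: any two of its words agree in some
  coordinate. The theorem follows from a stability version of the Erdos-Ko-Rado bound
  |J| <= r^n for intersecting J in Z_r^(n+1): if r >= 3 and J is not contained in a
  dictatorship {x. x i = a}, then 2 |J| + (r-1)^n <= 2 r^n. The density hypothesis makes J
  larger than that, so J lies in a dictatorship, an independent set of density exactly 1/r.
  Only r >= 3 and eps < (1 - 1/r)^(n-1) / 2 are needed.

  Split J by the difference k (mod r) of the last two
  coordinates of its words and delete the last coordinate: two words with equal difference
  that agree in the last coordinate also agree in the one before, so each of the r slices is
  again intersecting. For the stability bound, a slice violating it lies in a dictatorship by
  induction; counting the words of that dictatorship that avoid some word of J shows that J
  then lies in the cross of a word x of difference k (the words agreeing with x in one of the
  last two coordinates), and crosses for two different differences would put J into a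
  dictatorship. So at most one slice is exceptional, and summing the bounds over the slices
  gives the claim.
*)
theory Submission
  imports Defs "HOL-Library.FuncSet" "HOL-Number_Theory.Cong"
begin

definition box :: "nat \<Rightarrow> (nat \<Rightarrow> nat set) \<Rightarrow> (nat \<Rightarrow> nat) set" where
  "box n S = {x. (\<forall>j<n. x j \<in> S j) \<and> (\<forall>j\<ge>n. x j = 0)}"

lemma bij_betw_restrict_box: "bij_betw (\<lambda>x. restrict x {..<n}) (box n S) (Pi\<^sub>E {..<n} S)"
proof (rule bij_betwI')
  fix x y assume "x \<in> box n S" "y \<in> box n S"
  then show "(restrict x {..<n} = restrict y {..<n}) = (x = y)"
    by (auto simp: box_def fun_eq_iff) (metis not_less)
next
  fix x assume "x \<in> box n S"
  then show "restrict x {..<n} \<in> Pi\<^sub>E {..<n} S" by (auto simp: box_def)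
next
  fix f assume f: "f \<in> Pi\<^sub>E {..<n} S"
  show "\<exists>x\<in>box n S. f = restrict x {..<n}"
    by (rule bexI[of _ "\<lambda>j. if j < n then f j else 0"]) (use f in \<open>auto simp: box_def fun_eq_iff\<close>)
qed

lemma card_box: "card (box n S) = (\<Prod>j<n. card (S j))"
  using bij_betw_same_card[OF bij_betw_restrict_box] by (simp add: card_PiE)

lemma finite_box: "(\<And>j. j < n \<Longrightarrow> finite (S j)) \<Longrightarrow> finite (box n S)"
  using bij_betw_finite[OF bij_betw_restrict_box] by (auto intro: finite_PiE)

lemma card_box_hitting_le:
  assumes "F \<subseteq> box n T" "\<And>j. j < n \<Longrightarrow> finite (T j)" "\<And>y. y \<in> F \<Longrightarrow> \<exists>j<n. y j \<in> B j"
  shows "card F + (\<Prod>j<n. card (T j - B j)) \<le> (\<Prod>j<n. card (T j))"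
proof -
  have fin: "finite (box n T)" using assms(2) by (rule finite_box)
  have avoid: "box n (\<lambda>j. T j - B j) \<subseteq> box n T" by (auto simp: box_def)
  have "F \<subseteq> box n T - box n (\<lambda>j. T j - B j)" using assms(1,3) by (fastforce simp: box_def)
  then have "card F \<le> card (box n T - box n (\<lambda>j. T j - B j))"
    using fin by (intro card_mono) auto
  also have "\<dots> = card (box n T) - card (box n (\<lambda>j. T j - B j))"
    using fin avoid by (intro card_Diff_subset) (auto intro: finite_subset)
  finally show ?thesis using card_mono[OF fin avoid] by (simp add: card_box)
qed

lemma kvert_eq_box: "kvert r n = box n (\<lambda>_. {..<r})"
  by (auto simp: kvert_def box_def)

lemma card_kvert: "card (kvert r n) = r ^ n"
  by (simp add: kvert_eq_box card_box)

lemma kvert_less: "x \<in> kvert r n \<Longrightarrow> j < n \<Longrightarrow> x j < r"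
  by (simp add: kvert_def)

lemma finite_kvert: "finite (kvert r n)"
  by (simp add: kvert_eq_box finite_box)

definition dictatorship :: "nat \<Rightarrow> nat \<Rightarrow> nat \<Rightarrow> nat \<Rightarrow> (nat \<Rightarrow> nat) set" where
  "dictatorship r n i a = {x \<in> kvert r n. x i = a}"

lemma dictatorship_eq_box:
  "i < n \<Longrightarrow> a < r \<Longrightarrow> dictatorship r n i a = box n (\<lambda>j. if j = i then {a} else {..<r})"
  unfolding dictatorship_def kvert_def box_def by (auto simp: if_distrib)

lemma card_dictatorship:
  assumes "i < n" "a < r"
  shows "card (dictatorship r n i a) = r ^ (n - 1)"
  using assms by (simp add: dictatorship_eq_box card_box prod_gen_delta if_distrib cong: if_cong)

lemma kindep_dictatorship: "i < n \<Longrightarrow> kindep r n (dictatorship r n i a)"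
  by (auto simp: kindep_def kadj_def dictatorship_def)

definition intersecting :: "nat \<Rightarrow> (nat \<Rightarrow> nat) set \<Rightarrow> bool" where
  "intersecting n J \<longleftrightarrow> (\<forall>x\<in>J. \<forall>y\<in>J. \<exists>j<n. x j = y j)"

lemma kindep_iff_intersecting: "kindep r n J \<longleftrightarrow> J \<subseteq> kvert r n \<and> intersecting n J"
  by (auto simp: kindep_def kadj_def intersecting_def)

definition mod_diff :: "nat \<Rightarrow> nat \<Rightarrow> nat \<Rightarrow> nat" where
  "mod_diff r b a = (b + r - a) mod r"

lemma mod_diff_eq_iff:
  assumes "a < r" "a' < r" "b < r" "b' < r" "mod_diff r b a = mod_diff r b' a'"
  shows "a = a' \<longleftrightarrow> b = b'"
proof -
  have "[b + r - a + (a + a') = b' + r - a' + (a + a')] (mod r)"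
    using assms(5) unfolding mod_diff_def cong_def[symmetric] by (rule cong_add) simp
  moreover have "b + r - a + (a + a') = (b + a') + r" "b' + r - a' + (a + a') = (b' + a) + r"
    using assms(1,2) by simp_all
  ultimately have cross: "[b + a' = b' + a] (mod r)"
    by (simp add: cong_def)
  show ?thesis
  proof
    assume "a = a'"
    then have "[b = b'] (mod r)" using cross cong_add_rcancel_nat by simp
    then show "b = b'" using assms(3,4) by (rule cong_less_modulus_unique_nat)
  next
    assume "b = b'"
    then have "[a' = a] (mod r)" using cross cong_add_lcancel_nat by simp
    then show "a = a'" using assms(1,2) by (metis cong_less_modulus_unique_nat)
  qed
qed

lemma mod_diff_less: "0 < r \<Longrightarrow> mod_diff r b a < r"
  by (simp add: mod_diff_def)

definition slice :: "nat \<Rightarrow> nat \<Rightarrow> nat \<Rightarrow> (nat \<Rightarrow> nat) set \<Rightarrow> (nat \<Rightarrow> nat) set" where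
  "slice r m k J = (\<lambda>x. x(Suc m := 0)) ` {x \<in> J. mod_diff r (x (Suc m)) (x m) = k}"

lemma slice_subset_kvert: "J \<subseteq> kvert r (Suc (Suc m)) \<Longrightarrow> slice r m k J \<subseteq> kvert r (Suc m)"
  by (auto simp: slice_def kvert_def)

lemma slice_memE:
  assumes "y \<in> slice r m k J"
  obtains x where "x \<in> J" "mod_diff r (x (Suc m)) (x m) = k" "y = x(Suc m := 0)"
  using assms unfolding slice_def by blast

lemma intersecting_slice:
  assumes "J \<subseteq> kvert r (Suc (Suc m))" "intersecting (Suc (Suc m)) J"
  shows "intersecting (Suc m) (slice r m k J)"
  unfolding intersecting_def
proof (intro ballI)
  fix y y' assume y: "y \<in> slice r m k J" and y': "y' \<in> slice r m k J"
  obtain x where x: "x \<in> J" "mod_diff r (x (Suc m)) (x m) = k" "y = x(Suc m := 0)"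
    using y by (rule slice_memE)
  obtain x' where x': "x' \<in> J" "mod_diff r (x' (Suc m)) (x' m) = k" "y' = x'(Suc m := 0)"
    using y' by (rule slice_memE)
  obtain j where j: "j < Suc (Suc m)" "x j = x' j"
    using assms(2) x(1) x'(1) unfolding intersecting_def by blast
  show "\<exists>j<Suc m. y j = y' j"
  proof (cases "j = Suc m")
    case True
    have "x \<in> kvert r (Suc (Suc m))" "x' \<in> kvert r (Suc (Suc m))" using assms(1) x(1) x'(1) by auto
    then have "x m = x' m"
      using mod_diff_eq_iff[of "x m" r "x' m" "x (Suc m)" "x' (Suc m)"] x(2) x'(2) j(2) True
      by (simp add: kvert_less)
    then show ?thesis using x(3) x'(3) by (intro exI[of _ m]) simp
  next
    case False
    then show ?thesis using j x(3) x'(3) by (intro exI[of _ j]) simp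
  qed
qed

lemma card_slice:
  assumes "J \<subseteq> kvert r (Suc (Suc m))"
  shows "card (slice r m k J) = card {x \<in> J. mod_diff r (x (Suc m)) (x m) = k}"
  unfolding slice_def
proof (rule card_image, rule inj_onI)
  fix x x' assume "x \<in> {x \<in> J. mod_diff r (x (Suc m)) (x m) = k}"
    and "x' \<in> {x \<in> J. mod_diff r (x (Suc m)) (x m) = k}"
    and eq: "x(Suc m := 0) = x'(Suc m := 0)"
  then have "x \<in> kvert r (Suc (Suc m))" "x' \<in> kvert r (Suc (Suc m))"
    and "mod_diff r (x (Suc m)) (x m) = mod_diff r (x' (Suc m)) (x' m)"
    using assms by auto
  moreover have "x m = x' m" using fun_cong[OF eq, of m] by simp
  ultimately have "x (Suc m) = x' (Suc m)"
    using mod_diff_eq_iff[of "x m" r "x' m" "x (Suc m)" "x' (Suc m)"] by (simp add: kvert_less)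
  show "x = x'"
  proof
    fix j show "x j = x' j"
      using fun_cong[OF eq, of j] \<open>x (Suc m) = x' (Suc m)\<close> by (cases "j = Suc m") auto
  qed
qed

lemma card_eq_sum_card_slice:
  assumes "J \<subseteq> kvert r (Suc (Suc m))"
  shows "card J = (\<Sum>k<r. card (slice r m k J))"
proof -
  have "finite J" using assms finite_kvert finite_subset by blast
  moreover have "(\<lambda>x. mod_diff r (x (Suc m)) (x m)) ` J \<subseteq> {..<r}"
  proof (intro image_subsetI, simp)
    fix x assume "x \<in> J"
    then have "x m < r" using assms by (auto simp: kvert_less)
    then show "mod_diff r (x (Suc m)) (x m) < r" by (simp add: mod_diff_less)
  qed
  ultimately have "card J = (\<Sum>k<r. card {x \<in> J. mod_diff r (x (Suc m)) (x m) = k})"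
    using sum.group[of J "{..<r}" _ "\<lambda>_. 1::nat"] by simp
  then show ?thesis by (simp add: card_slice[OF assms])
qed

lemma intersecting_one_coordinate:
  assumes "J \<subseteq> kvert r 1" "intersecting 1 J" "x \<in> J"
  shows "x 0 < r \<and> J \<subseteq> dictatorship r 1 0 (x 0)"
  using assms by (auto simp: intersecting_def dictatorship_def kvert_def)

lemma card_intersecting_le:
  assumes "J \<subseteq> kvert r (Suc n)" "intersecting (Suc n) J"
  shows "card J \<le> r ^ n"
  using assms
proof (induction n arbitrary: J)
  case 0
  show ?case
  proof (cases "J = {}")
    case False
    then obtain x where "x \<in> J" by blast
    with 0 have "x 0 < r" and sub: "J \<subseteq> dictatorship r 1 0 (x 0)"
      using intersecting_one_coordinate by auto
    then show ?thesis
      using card_mono[OF _ sub] card_dictatorship[of 0 1 "x 0" r]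
      by (simp add: dictatorship_def finite_kvert)
  qed simp
next
  case (Suc m)
  have "card J = (\<Sum>k<r. card (slice r m k J))"
    using Suc.prems(1) by (rule card_eq_sum_card_slice)
  also have "\<dots> \<le> (\<Sum>k<r. r ^ m)"
    by (intro sum_mono Suc.IH slice_subset_kvert intersecting_slice Suc.prems)
  finally show ?case by simp
qed

lemma card_slice_le:
  assumes "intersecting (Suc (Suc m)) J" "w \<in> J" "slice r m k J \<subseteq> box (Suc m) T"
    "\<And>j. j \<le> m \<Longrightarrow> finite (T j)"
  shows "card (slice r m k J)
      + (\<Prod>j<m. card (T j - {w j})) * card (T m - insert (w m) {c. mod_diff r (w (Suc m)) c = k})
    \<le> (\<Prod>j<m. card (T j)) * card (T m)"
proof -
  \<comment> \<open>Agreement with w in the deleted coordinate m+1 fixes coordinate m through the difference k.\<close>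
  define B where "B j = (if j < m then {w j} else insert (w m) {c. mod_diff r (w (Suc m)) c = k})"
    for j
  have "\<exists>j<Suc m. y j \<in> B j" if y: "y \<in> slice r m k J" for y
  proof -
    obtain x where x: "x \<in> J" "mod_diff r (x (Suc m)) (x m) = k" "y = x(Suc m := 0)"
      using y by (rule slice_memE)
    obtain j where j: "j < Suc (Suc m)" "x j = w j"
      using assms(1,2) x(1) unfolding intersecting_def by blast
    show ?thesis
    proof (cases "j = Suc m")
      case True
      then have "y m \<in> B m" using x j(2) by (simp add: B_def)
      then show ?thesis by blast
    next
      case False
      then have "j < Suc m" using j(1) by simp
      moreover have "y j \<in> B j" using x(3) j False \<open>j < Suc m\<close> by (auto simp: B_def less_Suc_eq)
      ultimately show ?thesis by blast
    qed
  qed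
  then have "card (slice r m k J) + (\<Prod>j<Suc m. card (T j - B j)) \<le> (\<Prod>j<Suc m. card (T j))"
    using assms(3,4) by (intro card_box_hitting_le) auto
  moreover have "(\<Prod>j<m. card (T j - B j)) = (\<Prod>j<m. card (T j - {w j}))"
    by (intro prod.cong) (auto simp: B_def)
  ultimately show ?thesis by (simp add: B_def)
qed

lemma card_lessThan_diff_mod_diff:
  assumes "b < r"
  shows "r - 2 \<le> card ({..<r} - insert a {c. mod_diff r b c = k})"
proof -
  obtain c0 where c0: "\<And>c. c < r \<Longrightarrow> mod_diff r b c = k \<Longrightarrow> c = c0"
  proof (cases "\<exists>c<r. mod_diff r b c = k")
    case True
    then obtain c0 where "c0 < r" "mod_diff r b c0 = k" by blast
    then show ?thesis using that mod_diff_eq_iff[of _ r c0 b b] assms by metis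
  qed blast
  have "card {a, c0} \<le> 2" by (simp add: card_insert_if)
  then have "r - 2 \<le> card {..<r} - card {a, c0}" by simp
  also have "\<dots> \<le> card ({..<r} - {a, c0})" by (rule diff_card_le_card_Diff) simp
  also have "\<dots> \<le> card ({..<r} - insert a {c. mod_diff r b c = k})"
    using c0 by (intro card_mono) auto
  finally show ?thesis .
qed

lemma card_slice_dictatorship_inner:
  assumes "3 \<le> r" "J \<subseteq> kvert r (Suc (Suc m))" "intersecting (Suc (Suc m)) J"
    "i < m" "a < r" "slice r m k J \<subseteq> dictatorship r (Suc m) i a" "w \<in> J" "w i \<noteq> a"
  shows "2 * card (slice r m k J) + (r - 1) ^ m \<le> 2 * r ^ m"
proof -
  define T where "T = (\<lambda>j. if j = i then {a} else {..<r})"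
  define C where "C = insert (w m) {c. mod_diff r (w (Suc m)) c = k}"
  have w: "w j < r" if "j < Suc (Suc m)" for j using assms(2,7) that by (auto simp: kvert_less)
  have "slice r m k J \<subseteq> box (Suc m) T"
    using assms(4-6) dictatorship_eq_box[of i "Suc m" a r] by (simp add: T_def)
  then have count: "card (slice r m k J) + (\<Prod>j<m. card (T j - {w j})) * card (T m - C)
      \<le> (\<Prod>j<m. card (T j)) * card (T m)"
    unfolding C_def using assms(3,7) by (intro card_slice_le) (auto simp: T_def)
  have "(\<Prod>j<m. card (T j - {w j})) = (\<Prod>j<m. if j = i then 1 else r - 1)"
    using assms(8) w by (intro prod.cong) (auto simp: T_def)
  then have avoiding: "(\<Prod>j<m. card (T j - {w j})) = (r - 1) ^ (m - 1)"
    using assms(4) by (simp add: prod_gen_delta)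
  have "(\<Prod>j<m. card (T j)) = (\<Prod>j<m. if j = i then 1 else r)"
    by (intro prod.cong) (auto simp: T_def)
  then have all: "(\<Prod>j<m. card (T j)) * card (T m) = r ^ m"
    using assms(4) power_minus_mult[of m r] by (simp add: prod_gen_delta T_def)
  have "r - 2 \<le> card (T m - C)"
    using assms(4) w[of "Suc m"] by (simp add: T_def C_def card_lessThan_diff_mod_diff)
  then have "(r - 1) ^ (m - 1) * (r - 2) \<le> (r - 1) ^ (m - 1) * card (T m - C)"
    by (rule mult_le_mono2)
  moreover have "card (slice r m k J) + (r - 1) ^ (m - 1) * card (T m - C) \<le> r ^ m"
    using count unfolding avoiding all .
  moreover have "(r - 1) ^ m = (r - 1) ^ (m - 1) * (r - 1)"
    using assms(4) power_minus_mult[of m "r - 1"] by simp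
  moreover have "(r - 1) ^ (m - 1) * (r - 1) \<le> (r - 1) ^ (m - 1) * (2 * (r - 2))"
    using assms(1) by (intro mult_le_mono2) linarith
  ultimately show ?thesis by linarith
qed

lemma card_slice_dictatorship_last:
  assumes "J \<subseteq> kvert r (Suc (Suc m))" "intersecting (Suc (Suc m)) J"
    "a < r" "slice r m k J \<subseteq> dictatorship r (Suc m) m a"
    "w \<in> J" "w m \<noteq> a" "mod_diff r (w (Suc m)) a \<noteq> k"
  shows "card (slice r m k J) + (r - 1) ^ m \<le> r ^ m"
proof -
  define T where "T = (\<lambda>j. if j = m then {a} else {..<r})"
  have w: "w j < r" if "j < Suc (Suc m)" for j using assms(1,5) that by (auto simp: kvert_less)
  have "slice r m k J \<subseteq> box (Suc m) T"
    using assms(3,4) dictatorship_eq_box[of m "Suc m" a r] by (simp add: T_def)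
  then have "card (slice r m k J)
      + (\<Prod>j<m. card (T j - {w j})) * card (T m - insert (w m) {c. mod_diff r (w (Suc m)) c = k})
    \<le> (\<Prod>j<m. card (T j)) * card (T m)"
    using assms(2,5) by (intro card_slice_le) (auto simp: T_def)
  moreover have "(\<Prod>j<m. card (T j - {w j})) = (\<Prod>j<m. r - 1)"
    using w by (intro prod.cong) (auto simp: T_def)
  moreover have "(\<Prod>j<m. card (T j)) = (\<Prod>j<m. r)"
    by (intro prod.cong) (auto simp: T_def)
  moreover have "T m - insert (w m) {c. mod_diff r (w (Suc m)) c = k} = {a}"
    using assms(6,7) by (auto simp: T_def)
  ultimately show ?thesis by (simp add: T_def)
qed

definition cross :: "nat \<Rightarrow> nat \<Rightarrow> (nat \<Rightarrow> nat) \<Rightarrow> (nat \<Rightarrow> nat) set" where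
  "cross i j x = {w. w i = x i \<or> w j = x j}"

lemma large_slice_imp_cross:
  assumes "3 \<le> r" "J \<subseteq> kvert r (Suc (Suc m))" "intersecting (Suc (Suc m)) J"
    "\<not> (\<exists>i<Suc (Suc m). \<exists>a<r. J \<subseteq> dictatorship r (Suc (Suc m)) i a)"
    "i < Suc m" "a < r" "slice r m k J \<subseteq> dictatorship r (Suc m) i a"
    "2 * r ^ m < 2 * card (slice r m k J) + (r - 1) ^ m"
  shows "\<exists>x\<in>J. mod_diff r (x (Suc m)) (x m) = k \<and> J \<subseteq> cross m (Suc m) x"
proof (cases "i = m")
  case False
  have "\<not> J \<subseteq> dictatorship r (Suc (Suc m)) i a" using assms(4-6) by auto
  then obtain w where "w \<in> J" "w i \<noteq> a" using assms(2) by (auto simp: dictatorship_def)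
  moreover have "i < m" using False assms(5) by simp
  ultimately have "2 * card (slice r m k J) + (r - 1) ^ m \<le> 2 * r ^ m"
    using card_slice_dictatorship_inner[OF assms(1-3) _ assms(6,7)] by blast
  then show ?thesis using assms(8) by linarith
next
  case True
  have "(r - 1) ^ m \<le> r ^ m" by (simp add: power_mono)
  then have "slice r m k J \<noteq> {}" using assms(8) by auto
  then obtain y where "y \<in> slice r m k J" by blast
  then obtain x where x: "x \<in> J" "mod_diff r (x (Suc m)) (x m) = k" "y = x(Suc m := 0)"
    by (rule slice_memE)
  have "x m = a" using assms(7) True \<open>y \<in> slice r m k J\<close> x(3) by (auto simp: dictatorship_def)
  have "w m = a \<or> w (Suc m) = x (Suc m)" if w: "w \<in> J" for w
  proof (rule ccontr)
    assume "\<not> (w m = a \<or> w (Suc m) = x (Suc m))"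
    moreover have "w (Suc m) < r" "x (Suc m) < r" using assms(2) w x(1) by (auto simp: kvert_less)
    ultimately have "mod_diff r (w (Suc m)) a \<noteq> k"
      using mod_diff_eq_iff[of a r a "w (Suc m)" "x (Suc m)"] assms(6) x(2) \<open>x m = a\<close> by auto
    then have "card (slice r m k J) + (r - 1) ^ m \<le> r ^ m"
      using card_slice_dictatorship_last[OF assms(2,3,6)] assms(7) True w
        \<open>\<not> (w m = a \<or> w (Suc m) = x (Suc m))\<close> by blast
    then show False using assms(8) by linarith
  qed
  then show ?thesis using x(1,2) \<open>x m = a\<close> by (auto simp: cross_def)
qed

lemma constant_coordinate_of_two_crosses:
  assumes "J \<subseteq> cross i j x" "J \<subseteq> cross i j x'" "(x i, x j) \<noteq> (x' i, x' j)" "x \<in> J"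
  shows "(\<forall>w\<in>J. w i = x i) \<or> (\<forall>w\<in>J. w j = x j)"
proof (cases "x i = x' i")
  case True
  then have "x j \<noteq> x' j" using assms(3) by simp
  then show ?thesis using assms(1,2) True by (fastforce simp: cross_def)
next
  case False
  then have "x j = x' j" using assms(2,4) by (auto simp: cross_def)
  then show ?thesis using assms(1,2) False by (fastforce simp: cross_def)
qed

lemma card_intersecting_non_dictatorship:
  assumes "3 \<le> r" "J \<subseteq> kvert r (Suc n)" "intersecting (Suc n) J"
    "\<not> (\<exists>i<Suc n. \<exists>a<r. J \<subseteq> dictatorship r (Suc n) i a)"
  shows "2 * card J + (r - 1) ^ n \<le> 2 * r ^ n"
  using assms(2-4)
proof (induction n arbitrary: J)
  case 0
  have False
  proof (cases "J = {}")
    case True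
    then have "J \<subseteq> dictatorship r 1 0 0" by simp
    then show False using "0.prems"(3) assms(1) by auto
  next
    case False
    then obtain x where "x \<in> J" by blast
    then show False using intersecting_one_coordinate[of J r x] "0.prems" by auto
  qed
  then show ?case ..
next
  case (Suc m)
  note J = Suc.prems(1) and inter = Suc.prems(2) and nondict = Suc.prems(3)
  define S where "S k = slice r m k J" for k
  define large where "large k \<longleftrightarrow> 2 * r ^ m < 2 * card (S k) + (r - 1) ^ m" for k
  have S: "S k \<subseteq> kvert r (Suc m)" "intersecting (Suc m) (S k)" for k
    unfolding S_def using slice_subset_kvert[OF J] intersecting_slice[OF J inter] by auto
  have cross: "\<exists>x\<in>J. mod_diff r (x (Suc m)) (x m) = k \<and> J \<subseteq> cross m (Suc m) x"
    if "large k" for k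
  proof -
    have "\<exists>i<Suc m. \<exists>a<r. S k \<subseteq> dictatorship r (Suc m) i a"
    proof (rule ccontr)
      assume "\<not> (\<exists>i<Suc m. \<exists>a<r. S k \<subseteq> dictatorship r (Suc m) i a)"
      from Suc.IH[OF S this] show False using that unfolding large_def by linarith
    qed
    then obtain i a where "i < Suc m" "a < r" "S k \<subseteq> dictatorship r (Suc m) i a" by blast
    then show ?thesis
      using large_slice_imp_cross[OF assms(1) J inter nondict, of i a k] that
      by (simp add: large_def S_def)
  qed
  have unique: "k = k'" if large: "large k" "large k'" for k k'
  proof (rule ccontr)
    assume "k \<noteq> k'"
    obtain x where x: "x \<in> J" "mod_diff r (x (Suc m)) (x m) = k" "J \<subseteq> cross m (Suc m) x"
      using cross large(1) by blast
    obtain x' where x': "mod_diff r (x' (Suc m)) (x' m) = k'" "J \<subseteq> cross m (Suc m) x'"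
      using cross large(2) by blast
    have "(x m, x (Suc m)) \<noteq> (x' m, x' (Suc m))" using x(2) x'(1) \<open>k \<noteq> k'\<close> by auto
    then have "(\<forall>w\<in>J. w m = x m) \<or> (\<forall>w\<in>J. w (Suc m) = x (Suc m))"
      using constant_coordinate_of_two_crosses[OF x(3) x'(2) _ x(1)] by blast
    then have "J \<subseteq> dictatorship r (Suc (Suc m)) m (x m)
        \<or> J \<subseteq> dictatorship r (Suc (Suc m)) (Suc m) (x (Suc m))"
      using J by (auto simp: dictatorship_def)
    moreover have "x m < r" "x (Suc m) < r" using J x(1) by (auto simp: kvert_less)
    moreover have "m < Suc (Suc m)" "Suc m < Suc (Suc m)" by simp_all
    ultimately show False using nondict by blast
  qed
  obtain k0 where k0: "\<And>k. large k \<Longrightarrow> k = k0"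
  proof (cases "\<exists>k. large k")
    case True
    then obtain k1 where "large k1" by blast
    then show ?thesis using that unique by blast
  qed blast
  have bound: "2 * card (S k) + (r - 1) ^ m \<le> 2 * r ^ m + (if k = k0 then (r - 1) ^ m else 0)" for k
  proof (cases "large k")
    case True
    then have "k = k0" by (rule k0)
    moreover have "card (S k) \<le> r ^ m" using S by (rule card_intersecting_le)
    ultimately show ?thesis by simp
  next
    case False
    then show ?thesis by (simp add: large_def)
  qed
  have "2 * card J + r * (r - 1) ^ m = (\<Sum>k<r. 2 * card (S k) + (r - 1) ^ m)"
    using card_eq_sum_card_slice[OF J] by (simp add: S_def sum.distrib sum_distrib_left)
  also have "\<dots> \<le> (\<Sum>k<r. 2 * r ^ m + (if k = k0 then (r - 1) ^ m else 0))"
    by (intro sum_mono bound)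
  also have "\<dots> \<le> 2 * r ^ Suc m + (r - 1) ^ m"
    by (simp add: sum.distrib)
  finally have "2 * card J + r * (r - 1) ^ m \<le> 2 * r ^ Suc m + (r - 1) ^ m" .
  moreover have "r * (r - 1) ^ m = (r - 1) ^ Suc m + (r - 1) ^ m"
    using assms(1) by (cases r) simp_all
  ultimately show ?case by linarith
qed

lemma double_card_gt_of_density:
  fixes \<epsilon> :: real
  assumes "0 < r" "real N = real r ^ n * (1 - \<epsilon>)" "\<epsilon> < (1 - 1 / real r) ^ n / 2"
  shows "2 * r ^ n < 2 * N + (r - 1) ^ n"
proof -
  have "(1 - 1 / real r) ^ n * real r ^ n = (real r - 1) ^ n"
    using assms(1) by (simp add: power_mult_distrib[symmetric] field_simps)
  moreover have "\<epsilon> * real r ^ n < (1 - 1 / real r) ^ n / 2 * real r ^ n"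
    using assms(1,3) by (intro mult_strict_right_mono) simp_all
  ultimately have "2 * real r ^ n < 2 * real N + (real r - 1) ^ n"
    using assms(2) by (simp add: algebra_simps)
  then have "real (2 * r ^ n) < real (2 * N + (r - 1) ^ n)"
    using assms(1) by (simp add: of_nat_diff)
  then show ?thesis by (simp only: of_nat_less_iff)
qed

theorem corollary1:
  fixes r n :: nat and \<epsilon> c :: real and J :: "(nat \<Rightarrow> nat) set"
  assumes "r \<ge> 20" and "n \<ge> 1"
    and "c = (1/40) * min (10 powr (-9)) ((1 - 1 / real r) ^ (n - 1))"
    and "0 \<le> \<epsilon>" and "\<epsilon> < c"
    and "kindep r n J"
    and "real (card J) / real (card (kvert r n)) = (1 / real r) * (1 - \<epsilon>)"
  shows "\<exists>I. kindep r n I \<and> real (card I) / real (card (kvert r n)) = 1 / real r \<and> J \<subseteq> I"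
proof -
  obtain n' where n: "n = Suc n'" using assms(2) by (cases n) auto
  have J: "J \<subseteq> kvert r n" "intersecting n J" using assms(6) by (simp_all add: kindep_iff_intersecting)
  have "real (card J) = real r ^ n' * (1 - \<epsilon>)"
    using assms(1,7) by (simp add: card_kvert n field_simps)
  moreover have "\<epsilon> < (1 - 1 / real r) ^ n' / 2"
  proof -
    have "c \<le> (1 / 40) * (1 - 1 / real r) ^ n'" "0 \<le> (1 - 1 / real r) ^ n'"
      using assms(1,3) by (simp_all add: n)
    then show ?thesis using assms(5) by linarith
  qed
  ultimately have "2 * r ^ n' < 2 * card J + (r - 1) ^ n'"
    using assms(1) by (intro double_card_gt_of_density) auto
  then obtain i a where dict: "i < n" "a < r" "J \<subseteq> dictatorship r n i a"
    using card_intersecting_non_dictatorship[of r J n'] assms(1) J n by fastforce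
  show ?thesis
  proof (intro exI conjI)
    show "kindep r n (dictatorship r n i a)" using dict(1) by (rule kindep_dictatorship)
    show "real (card (dictatorship r n i a)) / real (card (kvert r n)) = 1 / real r"
      using assms(1) dict(1,2) by (simp add: card_dictatorship card_kvert n)
  qed (rule dict(3))
qed

end
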